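(* Let $b_1,\dots,b_k$ be positive integers and $n_1,\dots,n_k$ integers with $\sum_in_ib_i=0$, and let $\alpha^{\mathfrak a}=\prod_{i=1}^k\big(c^{\mathfrak a}_1\cdots c^{\mathfrak a}_{b_i}\big)^{n_i}$. Then for every odd $m\ge3$, $$\frac{\delta_m\alpha^{\mathfrak a}}{\alpha^{\mathfrak a}}=-\frac{T^m}{m}\sum_{i=1}^kn_ib_i^m.$$
   Context: $\mathcal M^{(1)}=\mathbb Q[\zeta^{\mathfrak a}(3),\zeta^{\mathfrak a}(5),\dots]$ is the free polynomial subalgebra of depth-one motivic MZVs in $\mathcal A=\mathcal H/\zeta^{\mathfrak m}(2)\mathcal H$; $\zeta^{\mathfrak a}(k)=0$ for even $k$. For odd $m\ge3$, $\delta_m$ is the continuous $\mathbb Q((T))$-linear derivation $\partial/\partial\zeta^{\mathfrak a}(m)$ of $\mathcal M^{(1)}((T))$. $H^{\mathfrak a}(n)=(-1)^n\sum_{j\ge1}\binom{n+j-1}{n-1}\zeta^{\mathfrak a}(n+j)T^j$; $H^{\mathfrak a}(1^0)=1$, $H^{\mathfrak a}(1^n)=\frac1n\sum_{i=1}^n(-1)^{i-1}H^{\mathfrak a}(i)H^{\mathfrak a}(1^{n-i})$; $c_n^{\mathfrak a}=n\sum_{j\ge0}(n-1)^jT^jH^{\mathfrak a}(1^j)$ for $n\ge1$ (invertible in $\mathcal M^{(1)}[[T]]$). *)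

theory Defs
  imports "HOL-Library.Poly_Mapping" "HOL-Computational_Algebra.Formal_Power_Series"
begin

text \<open>The free polynomial algebra over Q in the variables zeta(k), k in nat.
  A monomial is a finitely supported exponent vector nat =>0 nat (variable k
  stands for zeta^a(k)); a polynomial is a finitely supported map from
  monomials to Q, with the convolution product of Poly_Mapping.
  M^(1) = Q[zeta^a(3), zeta^a(5), ...] is the subalgebra generated by the
  odd-indexed variables with index >= 3.\<close>
type_synonym M1 = "(nat \<Rightarrow>\<^sub>0 nat) \<Rightarrow>\<^sub>0 rat"

definition mconst :: "rat \<Rightarrow> M1" where
  "mconst r = Poly_Mapping.single 0 r"

definition zeta_a :: "nat \<Rightarrow> M1" where
  "zeta_a k = (if odd k \<and> 3 \<le> k then Poly_Mapping.single (Poly_Mapping.single k 1) 1 else 0)"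

definition var_mon :: "nat \<Rightarrow> (nat \<Rightarrow>\<^sub>0 nat)" where
  "var_mon m = Poly_Mapping.single m 1"

definition pderiv_var :: "nat \<Rightarrow> M1 \<Rightarrow> M1" where
  "pderiv_var m p = Abs_poly_mapping
     (\<lambda>mon. of_nat (Poly_Mapping.lookup mon m + 1) * Poly_Mapping.lookup p (mon + var_mon m))"

text \<open>delta_m on power series in T with coefficients in M^(1): the continuous
  Q((T))-linear extension of d/d zeta^a(m), i.e. acting coefficientwise.\<close>
definition delta :: "nat \<Rightarrow> M1 fps \<Rightarrow> M1 fps" where
  "delta m f = Abs_fps (\<lambda>j. pderiv_var m (fps_nth f j))"

definition H_a :: "nat \<Rightarrow> M1 fps" where
  "H_a n = Abs_fps (\<lambda>j. if j = 0 then 0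
      else (-1) ^ n * of_nat ((n + j - 1) choose (n - 1)) * zeta_a (n + j))"

fun H1_a :: "nat \<Rightarrow> M1 fps" where
  "H1_a 0 = 1"
| "H1_a (Suc n) = fps_const (mconst (1 / of_nat (Suc n))) *
      (\<Sum>i = 1..Suc n. (-1) ^ (i - 1) * H_a i * H1_a (Suc n - i))"

text \<open>c_n = n * sum_{j>=0} (n-1)^j T^j H(1^j); coefficient of T^k collects j <= k.\<close>
definition c_a :: "nat \<Rightarrow> M1 fps" where
  "c_a n = Abs_fps (\<lambda>k. of_nat n * (\<Sum>j\<le>k. of_nat ((n - 1) ^ j) * (fps_nth (H1_a j) (k - j))))"

definition unit_inv :: "'a::comm_ring_1 \<Rightarrow> 'a" where
  "unit_inv x = (THE y. x * y = 1)"

definition int_pow :: "'a::comm_ring_1 \<Rightarrow> int \<Rightarrow> 'a" where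
  "int_pow x e = (if 0 \<le> e then x ^ nat e else unit_inv x ^ nat (- e))"

end

theory Submission
  imports Defs
begin

text \<open>Since \<open>\<delta>\<^sub>m\<close> is a derivation, \<open>\<delta>\<^sub>m \<alpha> / \<alpha>\<close> is additive over products and
  scales with integer exponents, so it equals the sum over i of \<open>n\<^sub>i\<close> times
  \<open>\<delta>\<^sub>m c\<^sub>j / c\<^sub>j\<close> summed over j = 1..b i. Because the H(1^j) are the coefficients
  of \<open>exp (\<Sum>\<^sub>l (-1)^(l-1) H(l) t^l / l)\<close> and \<open>\<delta>\<^sub>m H(l) = (-1)^l C(m-1,l-1) T^(m-l)\<close>
  for l < m (and 0 for l \<ge> m), one finds \<open>\<delta>\<^sub>m c\<^sub>n / c\<^sub>n = T^m \<lambda>\<^sub>n\<close> with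
  \<open>\<lambda>\<^sub>n = -(n^m - 1 - (n-1)^m) / m\<close>. Summing over j = 1..b telescopes to
  \<open>-(b^m - b) / m\<close>, and the linear terms cancel because \<open>\<Sum> n\<^sub>i b\<^sub>i = 0\<close>.\<close>

unbundle fps_syntax

subsection \<open>Units, derivations and logarithmic derivatives\<close>

lemma unit_inv_eqI: "x * y = 1 \<Longrightarrow> unit_inv x = y"
  unfolding unit_inv_def
proof (rule the_equality)
  fix z assume "x * y = 1" "x * z = 1"
  then have "z = z * (x * y)" by simp
  also have "\<dots> = y * (x * z)" by (simp add: algebra_simps)
  finally show "z = y" using \<open>x * z = 1\<close> by simp
qed

lemma mult_unit_inv_right: "x dvd 1 \<Longrightarrow> x * unit_inv x = 1"
  by (metis dvdE unit_inv_eqI)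

lemma int_pow_dvd_one: "x dvd 1 \<Longrightarrow> int_pow x e dvd 1"
proof -
  assume "x dvd 1"
  then have "unit_inv x dvd 1"
    using mult_unit_inv_right by (metis dvd_triv_right)
  with \<open>x dvd 1\<close> show ?thesis
    unfolding int_pow_def using dvd_power_same[of _ 1] by (metis power_one)
qed

lemma prod_dvd_one: "(\<And>i. i \<in> A \<Longrightarrow> f i dvd 1) \<Longrightarrow> prod f A dvd 1"
  using prod_dvd_prod[of A f "\<lambda>_. 1"] by simp

locale derivation =
  fixes D :: "'a::comm_ring_1 \<Rightarrow> 'a"
  assumes add: "D (x + y) = D x + D y"
    and mult: "D (x * y) = D x * y + x * D y"
begin

lemma zero [simp]: "D 0 = 0"
  using add[of 0 0] by simp

lemma one [simp]: "D 1 = 0"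
  using mult[of 1 1] by simp

lemma uminus: "D (- x) = - D x"
  using add[of x "- x"] by (simp add: add_eq_0_iff)

lemma sum: "D (sum f A) = (\<Sum>x\<in>A. D (f x))"
  by (induction A rule: infinite_finite_induct) (simp_all add: add)

lemma of_nat [simp]: "D (of_nat n) = 0"
  by (induction n) (simp_all add: add)

lemma mult_const_left: "D c = 0 \<Longrightarrow> D (c * x) = c * D x"
  by (simp add: mult)

lemma power_const: "D c = 0 \<Longrightarrow> D (c ^ n) = 0"
  by (induction n) (simp_all add: mult)

lemma neg_one_power [simp]: "D ((- 1) ^ n) = 0"
  by (rule power_const) (simp add: uminus)

lemma log_deriv_mult:
  "D x = x * L \<Longrightarrow> D y = y * M \<Longrightarrow> D (x * y) = x * y * (L + M)"
  by (simp add: mult algebra_simps)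

lemma log_deriv_power: "D x = x * L \<Longrightarrow> D (x ^ n) = x ^ n * (of_nat n * L)"
  by (induction n) (simp_all add: mult algebra_simps)

lemma log_deriv_inverse:
  assumes "x * y = 1" and "D x = x * L"
  shows "D y = y * - L"
proof -
  have "0 = y * D (x * y)" using assms(1) by simp
  also have "\<dots> = L * y * (x * y) + (x * y) * D y"
    using assms(2) by (simp add: mult algebra_simps)
  finally show ?thesis using assms(1) by (simp add: algebra_simps add_eq_0_iff)
qed

lemma log_deriv_int_pow:
  assumes "x dvd 1" and "D x = x * L"
  shows "D (int_pow x e) = int_pow x e * (of_int e * L)"
proof (cases "0 \<le> e")
  case True
  then show ?thesis using log_deriv_power[OF assms(2), of "nat e"] by (simp add: int_pow_def)
next
  case False
  have "D (unit_inv x) = unit_inv x * - L"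
    using mult_unit_inv_right[OF assms(1)] assms(2) by (rule log_deriv_inverse)
  from log_deriv_power[OF this, of "nat (- e)"] False show ?thesis
    by (simp add: int_pow_def)
qed

lemma log_deriv_prod:
  "(\<And>i. i \<in> A \<Longrightarrow> D (f i) = f i * L i) \<Longrightarrow> D (prod f A) = prod f A * sum L A"
  by (induction A rule: infinite_finite_induct) (simp_all add: log_deriv_mult)

end

subsection \<open>The partial derivative on the polynomial algebra\<close>

lemma poly_mapping_single_induct [case_names zero add]:
  fixes p :: "'a \<Rightarrow>\<^sub>0 'b::comm_monoid_add"
  assumes "P 0" and "\<And>f a b. P f \<Longrightarrow> P (f + Poly_Mapping.single a b)"
  shows "P p"
proof (induction p rule: update_induct)
  case const then show ?case using assms(1) by simp
next
  case (update f a b)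
  have "Poly_Mapping.update a b f = f + Poly_Mapping.single a b"
    by (rule poly_mapping_eqI)
      (use update(1) in \<open>auto simp: lookup_update lookup_add lookup_single in_keys_iff when_def\<close>)
  then show ?case using assms(2) update by simp
qed

lemma lookup_pderiv_var:
  "Poly_Mapping.lookup (pderiv_var m p) mon =
     of_nat (Poly_Mapping.lookup mon m + 1) * Poly_Mapping.lookup p (mon + var_mon m)"
proof -
  let ?S = "{mon. of_nat (Poly_Mapping.lookup mon m + 1) * Poly_Mapping.lookup p (mon + var_mon m) \<noteq> (0::rat)}"
  have "?S \<subseteq> (\<lambda>k. k - var_mon m) ` Poly_Mapping.keys p"
    by (force simp: in_keys_iff)
  then have "finite ?S"
    by (rule finite_subset) simp
  then show ?thesis unfolding pderiv_var_def by simp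
qed

lemma pderiv_var_add: "pderiv_var m (p + q) = pderiv_var m p + pderiv_var m q"
  by (rule poly_mapping_eqI) (simp add: lookup_pderiv_var lookup_add algebra_simps)

lemma pderiv_var_zero [simp]: "pderiv_var m 0 = 0"
  by (rule poly_mapping_eqI) (simp add: lookup_pderiv_var)

lemma pderiv_var_single:
  "pderiv_var m (Poly_Mapping.single a c) =
     Poly_Mapping.single (a - var_mon m) (of_nat (Poly_Mapping.lookup a m) * c)"
proof (rule poly_mapping_eqI)
  fix mon
  show "Poly_Mapping.lookup (pderiv_var m (Poly_Mapping.single a c)) mon =
        Poly_Mapping.lookup (Poly_Mapping.single (a - var_mon m) (of_nat (Poly_Mapping.lookup a m) * c)) mon"
  proof (cases "a = mon + var_mon m")
    case True
    then show ?thesis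
      by (simp add: lookup_pderiv_var lookup_single lookup_add var_mon_def)
  next
    case False
    have "a - var_mon m \<noteq> mon \<or> Poly_Mapping.lookup a m = 0"
    proof (rule ccontr)
      assume "\<not> ?thesis"
      then have h: "a - var_mon m = mon" "Poly_Mapping.lookup a m \<noteq> 0" by auto
      have "a = mon + var_mon m"
        by (rule poly_mapping_eqI) (use h in \<open>auto simp: lookup_add lookup_minus var_mon_def lookup_single when_def\<close>)
      with False show False by simp
    qed
    then show ?thesis using False
      by (auto simp: lookup_pderiv_var lookup_single when_def)
  qed
qed

lemma minus_var_mon_add:
  "Poly_Mapping.lookup a m \<noteq> 0 \<Longrightarrow> a - var_mon m + b = a + b - var_mon m"
  by (rule poly_mapping_eqI) (auto simp: lookup_add lookup_minus var_mon_def lookup_single when_def)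

lemma pderiv_var_mult_single:
  "pderiv_var m (Poly_Mapping.single a c * Poly_Mapping.single b d) =
   pderiv_var m (Poly_Mapping.single a c) * Poly_Mapping.single b d +
   Poly_Mapping.single a c * pderiv_var m (Poly_Mapping.single b d)"
proof -
  have shift_left: "Poly_Mapping.single (a - var_mon m + b) (of_nat (Poly_Mapping.lookup a m) * c * d)
      = Poly_Mapping.single (a + b - var_mon m) (of_nat (Poly_Mapping.lookup a m) * c * (d::rat))"
    by (cases "Poly_Mapping.lookup a m = 0") (simp_all add: minus_var_mon_add)
  have shift_right: "Poly_Mapping.single (a + (b - var_mon m)) (c * (of_nat (Poly_Mapping.lookup b m) * d))
      = Poly_Mapping.single (a + b - var_mon m) (of_nat (Poly_Mapping.lookup b m) * c * (d::rat))"
  proof (cases "Poly_Mapping.lookup b m = 0")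
    case False
    then have "a + (b - var_mon m) = a + b - var_mon m"
      using minus_var_mon_add[of b m a] by (simp add: add.commute)
    then show ?thesis by (simp add: algebra_simps)
  qed simp
  have "pderiv_var m (Poly_Mapping.single a c) * Poly_Mapping.single b d +
   Poly_Mapping.single a c * pderiv_var m (Poly_Mapping.single b d) =
   Poly_Mapping.single (a - var_mon m + b) (of_nat (Poly_Mapping.lookup a m) * c * d) +
   Poly_Mapping.single (a + (b - var_mon m)) (c * (of_nat (Poly_Mapping.lookup b m) * d))"
    by (simp add: pderiv_var_single mult_single)
  also have "\<dots> = Poly_Mapping.single (a + b - var_mon m)
     (of_nat (Poly_Mapping.lookup a m) * c * d + of_nat (Poly_Mapping.lookup b m) * c * d)"
    by (simp only: shift_left shift_right single_add)
  also have "\<dots> = pderiv_var m (Poly_Mapping.single a c * Poly_Mapping.single b d)"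
    by (simp add: pderiv_var_single mult_single lookup_add algebra_simps)
  finally show ?thesis by simp
qed

lemma pderiv_var_mult: "pderiv_var m (p * q) = pderiv_var m p * q + p * pderiv_var m q"
proof (induction p rule: poly_mapping_single_induct)
  case zero
  then show ?case by simp
next
  case (add f a c)
  have "pderiv_var m (Poly_Mapping.single a c * q) =
      pderiv_var m (Poly_Mapping.single a c) * q + Poly_Mapping.single a c * pderiv_var m q"
  proof (induction q rule: poly_mapping_single_induct)
    case zero
    then show ?case by simp
  next
    case (add g b d)
    then show ?case
      by (simp add: distrib_left distrib_right pderiv_var_add pderiv_var_mult_single algebra_simps)
  qed
  with add show ?case
    by (simp add: distrib_left distrib_right pderiv_var_add algebra_simps)
qed

interpretation pderiv_var: derivation "pderiv_var m" for m
  by unfold_locales (rule pderiv_var_add, rule pderiv_var_mult)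

lemma pderiv_var_zeta_a:
  assumes "odd m" and "3 \<le> m"
  shows "pderiv_var m (zeta_a k) = (if k = m then 1 else 0)"
proof (cases "odd k \<and> 3 \<le> k")
  case True
  then show ?thesis
    by (auto simp: zeta_a_def pderiv_var_single var_mon_def lookup_single)
next
  case False
  then have "k \<noteq> m" using assms by auto
  then show ?thesis using False by (auto simp: zeta_a_def)
qed

lemma mconst_zero [simp]: "mconst 0 = 0"
  by (simp add: mconst_def)

lemma mconst_one [simp]: "mconst 1 = 1"
  by (simp add: mconst_def)

lemma mconst_add: "mconst (a + b) = mconst a + mconst b"
  by (simp add: mconst_def single_add)

lemma mconst_mult: "mconst (a * b) = mconst a * mconst b"
  by (simp add: mconst_def mult_single)

lemma mconst_of_nat: "mconst (of_nat n) = of_nat n"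
  by (simp add: mconst_def single_of_nat)

lemma mconst_uminus: "mconst (- a) = - mconst a"
  by (simp add: mconst_def single_uminus)

lemma mconst_diff: "mconst (a - b) = mconst a - mconst b"
  by (simp add: mconst_def single_diff)

lemma mconst_of_int: "mconst (of_int z) = of_int z"
  by (cases z rule: int_cases) (simp_all add: mconst_uminus mconst_of_nat mconst_add mconst_diff)

lemma mconst_sum: "mconst (sum f A) = (\<Sum>x\<in>A. mconst (f x))"
  by (induction A rule: infinite_finite_induct) (simp_all add: mconst_add)

lemma mconst_power: "mconst (a ^ n) = mconst a ^ n"
  by (induction n) (simp_all add: mconst_mult)

lemma of_nat_mult_mconst_inverse: "n \<noteq> 0 \<Longrightarrow> of_nat n * mconst (1 / of_nat n) = 1"
  by (simp flip: mconst_of_nat mconst_mult)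

lemma fps_const_sum: "fps_const (sum f A) = (\<Sum>x\<in>A. fps_const (f x))"
  by (induction A rule: infinite_finite_induct) (simp_all flip: fps_const_add)

lemma delta_nth [simp]: "delta m f $ j = pderiv_var m (f $ j)"
  by (simp add: delta_def)

interpretation delta: derivation "delta m" for m
proof
  show "delta m (f + g) = delta m f + delta m g" for f g
    by (rule fps_ext) (simp add: pderiv_var.add)
  show "delta m (f * g) = delta m f * g + f * delta m g" for f g
    by (rule fps_ext) (simp add: fps_mult_nth pderiv_var.sum pderiv_var.mult sum.distrib)
qed

subsection \<open>The derivatives of the H series\<close>

lemma fps_neg_one_power_mult_nth: "((- 1) ^ k * f) $ j = (- 1) ^ k * (f :: 'a::ring_1 fps) $ j"
  by (induction k) (simp_all add: mult.assoc mult_minus1)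

lemma delta_H_a:
  assumes "odd m" and "3 \<le> m" and "1 \<le> l"
  shows "(- 1) ^ (l - 1) * delta m (H_a l) =
    (if l < m then fps_X ^ (m - l) * fps_const (- of_nat ((m - 1) choose (l - 1))) else 0)"
proof (rule fps_ext)
  fix j
  obtain k where l: "l = Suc k" using assms(3) by (cases l) auto
  have "pderiv_var m (zeta_a (l + j)) = (if l + j = m then 1 else 0)"
    using pderiv_var_zeta_a[OF assms(1,2)] by simp
  then show "((- 1) ^ (l - 1) * delta m (H_a l)) $ j =
      (if l < m then fps_X ^ (m - l) * fps_const (- of_nat ((m - 1) choose (l - 1))) else 0) $ j"
    unfolding l by (auto simp: fps_neg_one_power_mult_nth H_a_def fps_X_power_mult_nth
        pderiv_var.mult pderiv_var.uminus)
qed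

text \<open>\<open>delta_log_H1 m l\<close> is \<open>\<delta>\<^sub>m\<close> of \<open>(-1)^(l-1) H(l) / l\<close>, the coefficient of \<open>t^l\<close> in
  \<open>log (\<Sum>\<^sub>j H(1^j) t^j)\<close>.\<close>

definition delta_log_H1 :: "nat \<Rightarrow> nat \<Rightarrow> M1 fps" where
  "delta_log_H1 m l = (if 1 \<le> l \<and> l < m
     then fps_X ^ (m - l) * fps_const (mconst (- of_nat (m choose l) / of_nat m)) else 0)"

lemma delta_H_a_eq_delta_log_H1:
  assumes "odd m" and "3 \<le> m" and "1 \<le> l"
  shows "(- 1) ^ (l - 1) * delta m (H_a l) = of_nat l * delta_log_H1 m l"
proof (cases "l < m")
  case True
  have "of_nat l * of_nat (m choose l) = (of_nat m * of_nat ((m - 1) choose (l - 1)) :: rat)"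
    using times_binomial_minus1_eq[of l m] assms(3) by (simp flip: of_nat_mult)
  then have "of_nat l * (- of_nat (m choose l) / of_nat m) = (- of_nat ((m - 1) choose (l - 1)) :: rat)"
    using assms(2) by (simp add: field_simps)
  then have "of_nat l * mconst (- of_nat (m choose l) / of_nat m) = (- of_nat ((m - 1) choose (l - 1)) :: M1)"
    by (metis mconst_mult mconst_of_nat mconst_uminus)
  then have "of_nat l * fps_const (mconst (- of_nat (m choose l) / of_nat m)) =
      fps_const (- of_nat ((m - 1) choose (l - 1)))"
    by (simp only: fps_of_nat[symmetric] fps_const_mult)
  moreover have "(- 1) ^ (l - 1) * delta m (H_a l) =
      fps_X ^ (m - l) * fps_const (- of_nat ((m - 1) choose (l - 1)))"
    using delta_H_a[OF assms] True by simp
  ultimately show ?thesis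
    using True assms(3) unfolding delta_log_H1_def by (simp add: mult.left_commute)
next
  case False
  then have "(- 1) ^ (l - 1) * delta m (H_a l) = 0"
    using delta_H_a[OF assms] by simp
  with False show ?thesis by (simp add: delta_log_H1_def)
qed

lemma H1_a_Newton: "of_nat t * H1_a t = (\<Sum>i=1..t. (- 1) ^ (i - 1) * H_a i * H1_a (t - i))"
proof (cases t)
  case (Suc n)
  have "(of_nat (Suc n) :: M1 fps) * fps_const (mconst (1 / of_nat (Suc n))) = 1"
    by (simp only: fps_of_nat[symmetric] fps_const_mult of_nat_mult_mconst_inverse) simp
  then show ?thesis using Suc by (simp only: H1_a.simps mult.assoc[symmetric]) simp
qed simp

lemma sum_triangle_swap:
  fixes f :: "nat \<Rightarrow> nat \<Rightarrow> 'a::comm_monoid_add"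
  shows "(\<Sum>i=1..j. \<Sum>l=1..j-i. f i l) = (\<Sum>l=1..j. \<Sum>i=1..j-l. f i l)"
proof -
  have "(\<Sum>i=1..j. \<Sum>l=1..j-i. f i l) = (\<Sum>(i,l)\<in>(SIGMA i:{1..j}. {1..j-i}). f i l)"
    by (rule sum.Sigma) auto
  also have "\<dots> = (\<Sum>(l,i)\<in>(SIGMA l:{1..j}. {1..j-l}). f i l)"
    by (rule sum.reindex_bij_witness[where i="\<lambda>(l,i). (i,l)" and j="\<lambda>(i,l). (l,i)"]) auto
  also have "\<dots> = (\<Sum>l=1..j. \<Sum>i=1..j-l. f i l)"
    by (rule sum.Sigma[symmetric]) auto
  finally show ?thesis .
qed

lemma sum_H_a_mult_convolution_H1_a:
  "(\<Sum>i=1..j. (- 1) ^ (i - 1) * H_a i * (\<Sum>l=1..j-i. e l * H1_a (j - i - l))) =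
   (\<Sum>l=1..j. of_nat (j - l) * e l * H1_a (j - l))"
proof -
  have "(\<Sum>i=1..j. (- 1) ^ (i - 1) * H_a i * (\<Sum>l=1..j-i. e l * H1_a (j - i - l))) =
      (\<Sum>i=1..j. \<Sum>l=1..j-i. e l * ((- 1) ^ (i - 1) * H_a i * H1_a (j - l - i)))"
    by (simp add: sum_distrib_left diff_commute algebra_simps)
  also have "\<dots> = (\<Sum>l=1..j. \<Sum>i=1..j-l. e l * ((- 1) ^ (i - 1) * H_a i * H1_a (j - l - i)))"
    by (rule sum_triangle_swap)
  also have "\<dots> = (\<Sum>l=1..j. e l * (\<Sum>i=1..j-l. (- 1) ^ (i - 1) * H_a i * H1_a (j - l - i)))"
    by (simp add: sum_distrib_left)
  also have "\<dots> = (\<Sum>l=1..j. of_nat (j - l) * e l * H1_a (j - l))"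
  proof (rule sum.cong)
    fix l
    have "(\<Sum>i=1..j-l. (- 1) ^ (i - 1) * H_a i * H1_a (j - l - i)) = of_nat (j - l) * H1_a (j - l)"
      by (rule H1_a_Newton[symmetric])
    then show "e l * (\<Sum>i=1..j-l. (- 1) ^ (i - 1) * H_a i * H1_a (j - l - i)) =
        of_nat (j - l) * e l * H1_a (j - l)"
      by (simp add: algebra_simps)
  qed simp
  finally show ?thesis .
qed

lemma of_nat_mult_delta_H1_a:
  "of_nat j * delta m (H1_a j) =
     (\<Sum>i=1..j. (- 1) ^ (i - 1) * delta m (H_a i) * H1_a (j - i)) +
     (\<Sum>i=1..j. (- 1) ^ (i - 1) * H_a i * delta m (H1_a (j - i)))"
proof -
  have "of_nat j * delta m (H1_a j) = delta m (of_nat j * H1_a j)"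
    by (simp add: delta.mult_const_left)
  also have "\<dots> = delta m (\<Sum>i=1..j. (- 1) ^ (i - 1) * H_a i * H1_a (j - i))"
    by (simp only: H1_a_Newton)
  finally show ?thesis
    by (simp add: delta.sum delta.mult sum.distrib algebra_simps)
qed

lemma delta_H1_a:
  assumes "odd m" and "3 \<le> m"
  shows "delta m (H1_a j) = (\<Sum>l=1..j. delta_log_H1 m l * H1_a (j - l))"
proof (induction j rule: less_induct)
  case (less j)
  have from_H: "(\<Sum>i=1..j. (- 1) ^ (i - 1) * delta m (H_a i) * H1_a (j - i)) =
      (\<Sum>l=1..j. of_nat l * delta_log_H1 m l * H1_a (j - l))"
  proof (rule sum.cong)
    fix l assume "l \<in> {1..j}"
    then show "(- 1) ^ (l - 1) * delta m (H_a l) * H1_a (j - l) = of_nat l * delta_log_H1 m l * H1_a (j - l)"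
      by (subst delta_H_a_eq_delta_log_H1[OF assms, symmetric]) simp_all
  qed simp
  have "(\<Sum>i=1..j. (- 1) ^ (i - 1) * H_a i * delta m (H1_a (j - i))) =
      (\<Sum>i=1..j. (- 1) ^ (i - 1) * H_a i * (\<Sum>l=1..j-i. delta_log_H1 m l * H1_a (j - i - l)))"
    by (rule sum.cong) (simp_all add: less.IH)
  then have from_H1: "(\<Sum>i=1..j. (- 1) ^ (i - 1) * H_a i * delta m (H1_a (j - i))) =
      (\<Sum>l=1..j. of_nat (j - l) * delta_log_H1 m l * H1_a (j - l))"
    by (simp only: sum_H_a_mult_convolution_H1_a)
  have "of_nat j * delta m (H1_a j) =
      (\<Sum>l=1..j. (of_nat l + of_nat (j - l)) * (delta_log_H1 m l * H1_a (j - l)))"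
    unfolding of_nat_mult_delta_H1_a from_H from_H1 sum.distrib[symmetric]
    by (simp only: distrib_right mult.assoc)
  also have "\<dots> = of_nat j * (\<Sum>l=1..j. delta_log_H1 m l * H1_a (j - l))"
    by (simp add: sum_distrib_left)
  finally show ?case
    by (cases "j = 0") simp_all
qed

subsection \<open>The logarithmic derivative of the c series\<close>

lemma sum_triangle_shift:
  fixes g :: "nat \<Rightarrow> nat \<Rightarrow> 'a::comm_ring_1" and a :: "nat \<Rightarrow> 'a"
  assumes "1 \<le> m"
  shows "(\<Sum>j\<le>k. w ^ j * (\<Sum>l=1..j. if l < m \<and> m - l \<le> k - j then a l * g (j - l) (k - j - (m - l)) else 0))
    = (if k < m then 0 else (\<Sum>l=1..m-1. a l * w ^ l) * (\<Sum>j'\<le>k-m. w ^ j' * g j' (k - m - j')))"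
proof -
  define S where "S = {(j, l). j \<le> k \<and> 1 \<le> l \<and> l \<le> j \<and> l < m \<and> m - l \<le> k - j}"
  define F where "F = (\<lambda>(j, l). w ^ j * (a l * g (j - l) (k - j - (m - l))))"
  have "(\<Sum>j\<le>k. w ^ j * (\<Sum>l=1..j. if l < m \<and> m - l \<le> k - j then a l * g (j - l) (k - j - (m - l)) else 0))
      = (\<Sum>(j,l)\<in>(SIGMA j:{..k}. {1..j}). if l < m \<and> m - l \<le> k - j then w ^ j * (a l * g (j - l) (k - j - (m - l))) else 0)"
    by (subst sum.Sigma[symmetric]) (auto simp: sum_distrib_left intro!: sum.cong)
  also have "\<dots> = sum F S"
    by (rule sum.mono_neutral_cong_right) (auto simp: S_def F_def split: if_splits)
  finally have sum_over_S: "(\<Sum>j\<le>k. w ^ j * (\<Sum>l=1..j. if l < m \<and> m - l \<le> k - j then a l * g (j - l) (k - j - (m - l)) else 0)) = sum F S" .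
  show ?thesis
  proof (cases "k < m")
    case True
    then have "S = {}" by (auto simp: S_def)
    then show ?thesis using sum_over_S True by simp
  next
    case False
    define T where "T = {1..m-1} \<times> {..k-m}"
    have "(\<Sum>l=1..m-1. a l * w ^ l) * (\<Sum>j'\<le>k-m. w ^ j' * g j' (k - m - j'))
        = (\<Sum>(l,j')\<in>T. a l * w ^ l * (w ^ j' * g j' (k - m - j')))"
      unfolding T_def by (simp add: sum_product sum.cartesian_product)
    also have "\<dots> = sum F S"
    proof (rule sum.reindex_bij_witness[where i="\<lambda>(j,l). (l, j - l)" and j="\<lambda>(l,j'). (j' + l, l)"])
      fix p assume "p \<in> S" then show "(\<lambda>(l, j'). (j' + l, l)) ((\<lambda>(j, l). (l, j - l)) p) = p"
        by (auto simp: S_def)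
    next
      fix p assume "p \<in> S" then show "(\<lambda>(j, l). (l, j - l)) p \<in> T"
        by (auto simp: S_def T_def)
    next
      fix q assume "q \<in> T" then show "(\<lambda>(j, l). (l, j - l)) ((\<lambda>(l, j'). (j' + l, l)) q) = q"
        by (cases q) auto
    next
      fix q assume "q \<in> T" then show "(\<lambda>(l, j'). (j' + l, l)) q \<in> S"
        using False by (auto simp: S_def T_def)
    next
      fix q assume "q \<in> T"
      then obtain l j' where q: "q = (l, j')" "1 \<le> l" "l \<le> m - 1" "j' \<le> k - m"
        by (auto simp: T_def)
      then have "k - (j' + l) - (m - l) = k - m - j'" using False by linarith
      with q show "F ((\<lambda>(l, j'). (j' + l, l)) q) = (case q of (l, j') \<Rightarrow> a l * w ^ l * (w ^ j' * g j' (k - m - j')))"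
        by (simp add: F_def power_add algebra_simps)
    qed
    finally show ?thesis using sum_over_S False by simp
  qed
qed

lemma delta_log_H1_mult_nth:
  "(delta_log_H1 m l * f) $ r = (if 1 \<le> l \<and> l < m \<and> m - l \<le> r
     then mconst (- of_nat (m choose l) / of_nat m) * f $ (r - (m - l)) else 0)"
  by (auto simp: delta_log_H1_def fps_X_power_mult_nth mult.assoc)

definition log_deriv_c_a :: "nat \<Rightarrow> nat \<Rightarrow> rat" where
  "log_deriv_c_a m n = (\<Sum>l=1..m-1. - of_nat (m choose l) / of_nat m * of_nat (n - 1) ^ l)"

lemma delta_c_a:
  assumes "odd m" and "3 \<le> m"
  shows "delta m (c_a n) = c_a n * (fps_X ^ m * fps_const (mconst (log_deriv_c_a m n)))"
proof (rule fps_ext)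
  fix k
  define w :: M1 where "w = of_nat (n - 1)"
  define a where "a l = mconst (- of_nat (m choose l) / of_nat m)" for l
  have delta_H1_nth: "pderiv_var m (H1_a j $ r) =
      (\<Sum>l=1..j. if l < m \<and> m - l \<le> r then a l * H1_a (j - l) $ (r - (m - l)) else 0)" for j r
  proof -
    have "pderiv_var m (H1_a j $ r) = delta m (H1_a j) $ r" by simp
    also have "\<dots> = (\<Sum>l=1..j. (delta_log_H1 m l * H1_a (j - l)) $ r)"
      by (simp only: delta_H1_a[OF assms] fps_sum_nth)
    also have "\<dots> = (\<Sum>l=1..j. if l < m \<and> m - l \<le> r then a l * H1_a (j - l) $ (r - (m - l)) else 0)"
      by (rule sum.cong) (simp_all add: delta_log_H1_mult_nth a_def)
    finally show ?thesis .
  qed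
  have log_deriv: "mconst (log_deriv_c_a m n) = (\<Sum>l=1..m-1. a l * w ^ l)"
    by (simp only: log_deriv_c_a_def mconst_sum mconst_mult mconst_power mconst_of_nat a_def w_def)
  have "delta m (c_a n) $ k = of_nat n * (\<Sum>j\<le>k. w ^ j * pderiv_var m (H1_a j $ (k - j)))"
    by (simp add: c_a_def w_def of_nat_power pderiv_var.mult_const_left pderiv_var.sum
        pderiv_var.power_const)
  also have "\<dots> = of_nat n * (if k < m then 0
      else (\<Sum>l=1..m-1. a l * w ^ l) * (\<Sum>j\<le>k-m. w ^ j * H1_a j $ (k - m - j)))"
    unfolding delta_H1_nth using assms(2)
    by (subst sum_triangle_shift[where g="\<lambda>j r. H1_a j $ r"]) auto
  also have "\<dots> = (fps_X ^ m * (fps_const (mconst (log_deriv_c_a m n)) * c_a n)) $ k"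
    by (simp add: fps_X_power_mult_nth c_a_def log_deriv w_def of_nat_power algebra_simps)
  finally show "delta m (c_a n) $ k = (c_a n * (fps_X ^ m * fps_const (mconst (log_deriv_c_a m n)))) $ k"
    by (simp add: algebra_simps)
qed

lemma sum_binomial_middle:
  fixes x :: "'a::comm_ring_1"
  assumes "2 \<le> m"
  shows "(\<Sum>l=1..m-1. of_nat (m choose l) * x ^ l) = (x + 1) ^ m - 1 - x ^ m"
proof -
  have "{..m} = insert 0 (insert m {1..m-1})" using assms by auto
  then have "(\<Sum>l\<le>m. of_nat (m choose l) * x ^ l) = 1 + (x ^ m + (\<Sum>l=1..m-1. of_nat (m choose l) * x ^ l))"
    using assms by (simp add: sum.insert)
  then show ?thesis by (simp add: binomial_ring)
qed

lemma log_deriv_c_a_eq: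
  assumes "2 \<le> m" and "1 \<le> n"
  shows "log_deriv_c_a m n = - (of_nat n ^ m - 1 - (of_nat n - 1) ^ m) / of_nat m"
proof -
  have "log_deriv_c_a m n = - (\<Sum>l=1..m-1. of_nat (m choose l) * of_nat (n - 1) ^ l) / of_nat m"
    by (simp add: log_deriv_c_a_def sum_divide_distrib sum_negf)
  also have "\<dots> = - ((of_nat (n - 1) + 1) ^ m - 1 - of_nat (n - 1) ^ m) / of_nat m"
    by (simp only: sum_binomial_middle[OF assms(1)])
  finally show ?thesis
    using assms(2) by (simp add: of_nat_diff)
qed

lemma sum_log_deriv_c_a:
  assumes "2 \<le> m"
  shows "(\<Sum>j=1..b. log_deriv_c_a m j) = - (of_nat b ^ m - of_nat b) / of_nat m"
  by (induction b) (use assms in \<open>simp_all add: log_deriv_c_a_eq field_simps\<close>)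

lemma c_a_dvd_one: "1 \<le> n \<Longrightarrow> c_a n dvd 1"
proof -
  assume "1 \<le> n"
  then have "c_a n $ 0 * mconst (1 / of_nat n) = 1"
    by (simp add: c_a_def of_nat_mult_mconst_inverse)
  then have "c_a n * fps_right_inverse (c_a n) (mconst (1 / of_nat n)) = 1"
    by (rule fps_right_inverse)
  then show ?thesis by (metis dvdI)
qed

lemma delta_prod_int_pow_c_a:
  fixes I :: "nat set" and b :: "nat \<Rightarrow> nat" and n :: "nat \<Rightarrow> int"
  assumes "odd m" and "3 \<le> m"
  defines "\<alpha> \<equiv> \<Prod>i\<in>I. int_pow (\<Prod>j = 1..b i. c_a j) (n i)"
  shows "delta m \<alpha> = \<alpha> * (fps_X ^ m *
      fps_const (mconst (\<Sum>i\<in>I. of_int (n i) * (\<Sum>j = 1..b i. log_deriv_c_a m j))))"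
    and "\<alpha> dvd 1"
proof -
  have unit: "(\<Prod>j = 1..b i. c_a j) dvd 1" for i
    by (rule prod_dvd_one) (simp add: c_a_dvd_one)
  have "delta m (\<Prod>j = 1..b i. c_a j) =
      (\<Prod>j = 1..b i. c_a j) * (\<Sum>j = 1..b i. fps_X ^ m * fps_const (mconst (log_deriv_c_a m j)))" for i
    by (rule delta.log_deriv_prod) (rule delta_c_a[OF assms(1,2)])
  then have "delta m (int_pow (\<Prod>j = 1..b i. c_a j) (n i)) = int_pow (\<Prod>j = 1..b i. c_a j) (n i) *
      (of_int (n i) * (\<Sum>j = 1..b i. fps_X ^ m * fps_const (mconst (log_deriv_c_a m j))))" for i
    by (rule delta.log_deriv_int_pow[OF unit])
  then have "delta m \<alpha> = \<alpha> * (\<Sum>i\<in>I. of_int (n i) *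
      (\<Sum>j = 1..b i. fps_X ^ m * fps_const (mconst (log_deriv_c_a m j))))"
    unfolding \<alpha>_def by (rule delta.log_deriv_prod)
  then show "delta m \<alpha> = \<alpha> * (fps_X ^ m *
      fps_const (mconst (\<Sum>i\<in>I. of_int (n i) * (\<Sum>j = 1..b i. log_deriv_c_a m j))))"
    by (simp add: mconst_sum mconst_mult mconst_of_int sum_distrib_left fps_const_sum
        algebra_simps flip: fps_of_int)
  show "\<alpha> dvd 1"
    unfolding \<alpha>_def by (intro prod_dvd_one int_pow_dvd_one unit)
qed

lemma sum_of_int_mult_sum_log_deriv_c_a:
  assumes "2 \<le> m" and "(\<Sum>i\<in>I. n i * int (b i)) = 0"
  shows "(\<Sum>i\<in>I. of_int (n i) * (\<Sum>j = 1..b i. log_deriv_c_a m j)) =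
    - (1 / of_nat m) * of_int (\<Sum>i\<in>I. n i * int (b i) ^ m)"
proof -
  have "(\<Sum>i\<in>I. of_int (n i) * (\<Sum>j = 1..b i. log_deriv_c_a m j)) =
      (\<Sum>i\<in>I. of_int (n i) * of_nat (b i) / of_nat m - of_int (n i) * of_nat (b i) ^ m / of_nat m)"
  proof (rule sum.cong)
    fix i
    have "(\<Sum>j = 1..b i. log_deriv_c_a m j) = - (of_nat (b i) ^ m - of_nat (b i)) / of_nat m"
      by (rule sum_log_deriv_c_a[OF assms(1)])
    then show "of_int (n i) * (\<Sum>j = 1..b i. log_deriv_c_a m j) =
        of_int (n i) * of_nat (b i) / of_nat m - of_int (n i) * of_nat (b i) ^ m / of_nat m"
      by (simp only:) (simp add: algebra_simps diff_divide_distrib)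
  qed simp
  also have "\<dots> = ((\<Sum>i\<in>I. of_int (n i) * of_nat (b i)) -
      (\<Sum>i\<in>I. of_int (n i) * of_nat (b i) ^ m)) / of_nat m"
    by (simp add: sum_subtractf sum_divide_distrib diff_divide_distrib)
  also have "\<dots> = - (1 / of_nat m) * of_int (\<Sum>i\<in>I. n i * int (b i) ^ m)"
    using arg_cong[OF assms(2), of "of_int :: int \<Rightarrow> rat"] by (simp add: of_int_sum)
  finally show ?thesis .
qed

theorem mainTheorem12:
  fixes k :: nat and b :: "nat \<Rightarrow> nat" and n :: "nat \<Rightarrow> int" and m :: nat
  assumes "\<forall>i\<in>{1..k}. 0 < b i"
    and "(\<Sum>i = 1..k. n i * int (b i)) = 0"
    and "odd m" and "3 \<le> m"
  shows "let \<alpha> = (\<Prod>i = 1..k. int_pow (\<Prod>j = 1..b i. c_a j) (n i)) in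
         delta m \<alpha> * unit_inv \<alpha> =
           - (fps_X ^ m * fps_const (mconst (1 / of_nat m))) *
             fps_const (mconst (of_int (\<Sum>i = 1..k. n i * int (b i) ^ m)))"
proof -
  define \<alpha> where "\<alpha> = (\<Prod>i = 1..k. int_pow (\<Prod>j = 1..b i. c_a j) (n i))"
  have "delta m \<alpha> * unit_inv \<alpha> =
      fps_X ^ m * fps_const (mconst (\<Sum>i = 1..k. of_int (n i) * (\<Sum>j = 1..b i. log_deriv_c_a m j)))"
    using delta_prod_int_pow_c_a[OF assms(3,4), where I="{1..k}" and b=b and n=n]
    by (simp add: \<alpha>_def mult.commute mult.left_commute mult_unit_inv_right)
  also have "\<dots> = fps_X ^ m *
      fps_const (mconst (- (1 / of_nat m) * of_int (\<Sum>i = 1..k. n i * int (b i) ^ m)))"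
    using assms(4) by (simp only: sum_of_int_mult_sum_log_deriv_c_a[OF _ assms(2)])
  also have "\<dots> = - (fps_X ^ m * fps_const (mconst (1 / of_nat m))) *
      fps_const (mconst (of_int (\<Sum>i = 1..k. n i * int (b i) ^ m)))"
    by (simp only: mconst_mult mconst_uminus fps_const_mult[symmetric] fps_const_neg[symmetric]
        mult_minus_left mult_minus_right mult.assoc)
  finally show ?thesis
    by (simp only: \<alpha>_def Let_def)
qed

end
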